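(* Let $a,b\in[0,1]$ with $a+b>1$, $\bar a=1-a$, $\bar b=1-b$, $\gamma=2^{\frac{H(b)-H(a)}{a+b-1}}$, $K=\frac{1}{(a+b-1)(\gamma+1)}$. Define functions $P_0,P_1$ on $\{0,1\}^n$, $n\ge0$, by $P_0(\emptyset)=P_1(\emptyset)=1$ and for $u\in\{0,1\}^{n-1}$: $P_0(0,u)=K(b\gamma P_0(u)-\bar bP_1(u))$, $P_0(1,u)=K(-\bar a\gamma P_0(u)+aP_1(u))$, $P_1(0,u)=K(aP_0(u)-\bar a\gamma P_1(u))$, $P_1(1,u)=K(-\bar bP_0(u)+b\gamma P_1(u))$. Define the sets $\mathcal L_0,\dots,\mathcal L_6$ of real numbers $\beta$: $\mathcal L_1=\{\max(\frac{\bar a}{\bar b}\gamma,\frac{\gamma(\bar a+b)-\sqrt{\gamma^2(\bar a+b)^2-4a\bar b}}{2\bar b})\le\beta\le\frac{\gamma(\bar a+b)+\sqrt{\gamma^2(\bar a+b)^2-4a\bar b}}{2\bar b}\}$, $\mathcal L_2=\{\frac{(a+\bar b)+\sqrt{(a+\bar b)^2-4\bar ab\gamma^2}}{2b\gamma}\le\beta\le\frac{\bar a}{\bar b}\gamma\}$, $\mathcal L_3=\{\beta\le\min(\frac{\bar a}{\bar b}\gamma,\frac{(a+\bar b)-\sqrt{(a+\bar b)^2-4\bar ab\gamma^2}}{2b\gamma})\}$, $\mathcal L_4=\{\beta\le\min(\frac{b\gamma}{a},\frac{\gamma(\bar a+b)-\sqrt{\gamma^2(\bar a+b)^2-4a\bar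 b}}{2a})\}$, $\mathcal L_5=\{\frac{\gamma(\bar a+b)+\sqrt{\gamma^2(\bar a+b)^2-4a\bar b}}{2a}\le\beta\le\frac{b\gamma}{a}\}$, $\mathcal L_6=\{\max(\frac{b\gamma}{a},\frac{(a+\bar b)-\sqrt{(a+\bar b)^2-4\bar ab\gamma^2}}{2\bar a\gamma})\le\beta\le\frac{(a+\bar b)+\sqrt{(a+\bar b)^2-4\bar ab\gamma^2}}{2\bar a\gamma}\}$, $\mathcal L_0=\{1\le\beta\le\min(\frac{a}{\bar a\gamma},\frac{b\gamma}{\bar b})\}$. If $(\mathcal L_1\cup\mathcal L_2\cup\mathcal L_3)\cap(\mathcal L_4\cup\mathcal L_5\cup\mathcal L_6)\cap\mathcal L_0\ne\emptyset$, then there exists $\beta$ with $1\le\beta\le\min\{\frac{a}{\bar a\gamma},\frac{b\gamma}{\bar b}\}$ such that for every $n\ge1$: if $\beta P_1(u)\ge P_0(u)$ and $\beta P_0(u)\ge P_1(u)$ for all $u\in\{0,1\}^{n-1}$, then $\beta P_1(x)\ge P_0(x)$ and $\beta P_0(x)\ge P_1(x)$ for all $x\in\{0,1\}^n$.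
   Context: $H(p)=-p\log_2p-(1-p)\log_2(1-p)$ is the binary entropy; $(0,u)$ denotes $0$ followed by the sequence $u$. *)

theory Defs
  imports "HOL-Analysis.Analysis"
begin

text \<open>Binary entropy with base-2 logarithm (log 2 0 = 0 in Isabelle, so 0 log 0 = 0).\<close>
definition H :: "real \<Rightarrow> real" where
  "H p = - p * log 2 p - (1 - p) * log 2 (1 - p)"

definition gam :: "real \<Rightarrow> real \<Rightarrow> real" where
  "gam a b = 2 powr ((H b - H a) / (a + b - 1))"

definition KK :: "real \<Rightarrow> real \<Rightarrow> real" where
  "KK a b = 1 / ((a + b - 1) * (gam a b + 1))"

text \<open>Binary strings are bool lists: False = 0, True = 1; the head is the first symbol.
  PP a b u = (P_0(u), P_1(u)).\<close>
fun PP :: "real \<Rightarrow> real \<Rightarrow> bool list \<Rightarrow> real \<times> real" where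
  "PP a b [] = (1, 1)"
| "PP a b (False # u) = (let (p0, p1) = PP a b u; g = gam a b; K = KK a b in
     (K * (b * g * p0 - (1 - b) * p1), K * (a * p0 - (1 - a) * g * p1)))"
| "PP a b (True # u) = (let (p0, p1) = PP a b u; g = gam a b; K = KK a b in
     (K * (- (1 - a) * g * p0 + a * p1), K * (- (1 - b) * p0 + b * g * p1)))"

definition P0 :: "real \<Rightarrow> real \<Rightarrow> bool list \<Rightarrow> real" where
  "P0 a b u = fst (PP a b u)"
definition P1 :: "real \<Rightarrow> real \<Rightarrow> bool list \<Rightarrow> real" where
  "P1 a b u = snd (PP a b u)"

text \<open>Discriminants; the sets involving a square root are taken to contain only
  \<beta> for which the square root is of a nonnegative number (the bounds exist as reals).\<close>
definition D1 :: "real \<Rightarrow> real \<Rightarrow> real" where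
  "D1 a b = (gam a b)^2 * ((1 - a) + b)^2 - 4 * a * (1 - b)"
definition D2 :: "real \<Rightarrow> real \<Rightarrow> real" where
  "D2 a b = (a + (1 - b))^2 - 4 * (1 - a) * b * (gam a b)^2"

definition L1 :: "real \<Rightarrow> real \<Rightarrow> real set" where
  "L1 a b = {\<beta>. D1 a b \<ge> 0 \<and>
     max ((1 - a) / (1 - b) * gam a b)
         ((gam a b * ((1 - a) + b) - sqrt (D1 a b)) / (2 * (1 - b))) \<le> \<beta> \<and>
     \<beta> \<le> (gam a b * ((1 - a) + b) + sqrt (D1 a b)) / (2 * (1 - b))}"

definition L2 :: "real \<Rightarrow> real \<Rightarrow> real set" where
  "L2 a b = {\<beta>. D2 a b \<ge> 0 \<and>
     ((a + (1 - b)) + sqrt (D2 a b)) / (2 * b * gam a b) \<le> \<beta> \<and>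
     \<beta> \<le> (1 - a) / (1 - b) * gam a b}"

definition L3 :: "real \<Rightarrow> real \<Rightarrow> real set" where
  "L3 a b = {\<beta>. D2 a b \<ge> 0 \<and>
     \<beta> \<le> min ((1 - a) / (1 - b) * gam a b)
               (((a + (1 - b)) - sqrt (D2 a b)) / (2 * b * gam a b))}"

definition L4 :: "real \<Rightarrow> real \<Rightarrow> real set" where
  "L4 a b = {\<beta>. D1 a b \<ge> 0 \<and>
     \<beta> \<le> min (b * gam a b / a)
               ((gam a b * ((1 - a) + b) - sqrt (D1 a b)) / (2 * a))}"

definition L5 :: "real \<Rightarrow> real \<Rightarrow> real set" where
  "L5 a b = {\<beta>. D1 a b \<ge> 0 \<and>
     (gam a b * ((1 - a) + b) + sqrt (D1 a b)) / (2 * a) \<le> \<beta> \<and>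
     \<beta> \<le> b * gam a b / a}"

definition L6 :: "real \<Rightarrow> real \<Rightarrow> real set" where
  "L6 a b = {\<beta>. D2 a b \<ge> 0 \<and>
     max (b * gam a b / a)
         (((a + (1 - b)) - sqrt (D2 a b)) / (2 * (1 - a) * gam a b)) \<le> \<beta> \<and>
     \<beta> \<le> ((a + (1 - b)) + sqrt (D2 a b)) / (2 * (1 - a) * gam a b)}"

definition L0 :: "real \<Rightarrow> real \<Rightarrow> real set" where
  "L0 a b = {\<beta>. 1 \<le> \<beta> \<and> \<beta> \<le> min (a / ((1 - a) * gam a b)) (b * gam a b / (1 - b))}"

end

theory Submission
  imports Defs
begin

text \<open>For \<open>\<beta> \<ge> 1\<close> the pairs \<open>(p\<^sub>0, p\<^sub>1)\<close> with \<open>p\<^sub>0 \<le> \<beta> p\<^sub>1\<close> and \<open>p\<^sub>1 \<le> \<beta> p\<^sub>0\<close> form the cone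
  spanned by \<open>(\<beta>, 1)\<close> and \<open>(1, \<beta>)\<close>. Both \<open>\<beta> P\<^sub>1(x) - P\<^sub>0(x)\<close> and \<open>\<beta> P\<^sub>0(x) - P\<^sub>1(x)\<close> are
  positive multiples of linear forms in \<open>(P\<^sub>0(u), P\<^sub>1(u))\<close> for \<open>x = (c, u)\<close>, so the cone is
  invariant under one step of the recursion as soon as these linear forms are nonnegative
  on the two generators. Evaluated on a generator, each form is (up to sign) one of the
  quadratics in \<open>\<beta>\<close> whose roots bound the sets \<open>\<L>\<^sub>i\<close>; membership of \<open>\<beta>\<close> in
  \<open>\<L>\<^sub>1 \<union> \<L>\<^sub>2 \<union> \<L>\<^sub>3\<close> and in \<open>\<L>\<^sub>4 \<union> \<L>\<^sub>5 \<union> \<L>\<^sub>6\<close> controls one generator and a sign, which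
  together control the other generator.\<close>

lemma quadratic_nonpos_between_roots:
  fixes c m e D \<beta> :: real
  assumes "c > 0" "D \<ge> 0" "D = m\<^sup>2 - 4 * c * e"
    and "(m - sqrt D) / (2 * c) \<le> \<beta>" "\<beta> \<le> (m + sqrt D) / (2 * c)"
  shows "c * \<beta>\<^sup>2 - m * \<beta> + e \<le> 0"
proof -
  have "m - sqrt D \<le> 2 * c * \<beta>" "2 * c * \<beta> \<le> m + sqrt D"
    using assms(1,4,5) by (simp_all add: pos_divide_le_eq pos_le_divide_eq mult.commute)
  then have "\<bar>2 * c * \<beta> - m\<bar> \<le> \<bar>sqrt D\<bar>"
    by simp
  then have "(2 * c * \<beta> - m)\<^sup>2 \<le> m\<^sup>2 - 4 * c * e"
    using assms(2,3) by (simp only: abs_le_square_iff) simp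
  then have "4 * c * (c * \<beta>\<^sup>2 - m * \<beta> + e) \<le> 0"
    by (simp add: power2_eq_square algebra_simps)
  then show ?thesis
    using assms(1) by (simp add: mult_le_0_iff)
qed

lemma quadratic_nonneg_outside_roots:
  fixes c m e D \<beta> :: real
  assumes "c > 0" "D \<ge> 0" "D = m\<^sup>2 - 4 * c * e"
    and "\<beta> \<le> (m - sqrt D) / (2 * c) \<or> (m + sqrt D) / (2 * c) \<le> \<beta>"
  shows "c * \<beta>\<^sup>2 - m * \<beta> + e \<ge> 0"
proof -
  have "2 * c * \<beta> \<le> m - sqrt D \<or> m + sqrt D \<le> 2 * c * \<beta>"
    using assms(1,4) by (auto simp: pos_divide_le_eq pos_le_divide_eq mult.commute)
  then have "\<bar>sqrt D\<bar> \<le> \<bar>2 * c * \<beta> - m\<bar>"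
    using real_sqrt_ge_zero[OF assms(2)] by (auto simp: abs_if)
  then have "m\<^sup>2 - 4 * c * e \<le> (2 * c * \<beta> - m)\<^sup>2"
    using assms(2,3) by (simp only: abs_le_square_iff) simp
  then have "4 * c * (c * \<beta>\<^sup>2 - m * \<beta> + e) \<ge> 0"
    by (simp add: power2_eq_square algebra_simps)
  then show ?thesis
    using assms(1) by (simp add: zero_le_mult_iff)
qed

definition ratio_bounded :: "real \<Rightarrow> real \<times> real \<Rightarrow> bool" where
  "ratio_bounded \<beta> p \<longleftrightarrow> fst p \<le> \<beta> * snd p \<and> snd p \<le> \<beta> * fst p"

text \<open>The linear form \<open>(p\<^sub>0, p\<^sub>1) \<mapsto> x p\<^sub>0 + y p\<^sub>1\<close> is nonnegative on the generators
  \<open>(\<beta>, 1)\<close> and \<open>(1, \<beta>)\<close>.\<close>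
definition cone_nonneg :: "real \<Rightarrow> real \<Rightarrow> real \<Rightarrow> bool" where
  "cone_nonneg \<beta> x y \<longleftrightarrow> 0 \<le> x * \<beta> + y \<and> 0 \<le> x + y * \<beta>"

lemma cone_nonneg_commute: "cone_nonneg \<beta> x y \<longleftrightarrow> cone_nonneg \<beta> y x"
  by (auto simp: cone_nonneg_def ac_simps)

lemma cone_nonneg_if_nonpos:
  assumes "1 \<le> \<beta>" "0 \<le> x + y * \<beta>" "y \<le> 0"
  shows "cone_nonneg \<beta> x y"
proof -
  have "x * \<beta> + y = \<beta> * (x + y * \<beta>) + (- y) * (\<beta>\<^sup>2 - 1)"
    by (simp add: power2_eq_square algebra_simps)
  moreover have "0 \<le> \<beta> * (x + y * \<beta>)" "0 \<le> (- y) * (\<beta>\<^sup>2 - 1)"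
    using assms by (simp_all add: one_le_power mult_nonpos_nonneg)
  ultimately show ?thesis
    using assms(2) by (simp add: cone_nonneg_def)
qed

lemma cone_nonneg_if_nonneg:
  assumes "1 \<le> \<beta>" "0 \<le> x * \<beta> + y" "0 \<le> y"
  shows "cone_nonneg \<beta> x y"
proof -
  have "\<beta> * (x + y * \<beta>) = (x * \<beta> + y) + y * (\<beta>\<^sup>2 - 1)"
    by (simp add: power2_eq_square algebra_simps)
  moreover have "0 \<le> y * (\<beta>\<^sup>2 - 1)"
    using assms by (simp add: one_le_power)
  ultimately have "0 \<le> \<beta> * (x + y * \<beta>)"
    using assms(2) by linarith
  then show ?thesis
    using assms(1,2) by (simp add: cone_nonneg_def zero_le_mult_iff)
qed

text \<open>At \<open>\<beta> = 1\<close> the cone degenerates to the whole diagonal, so the form must vanish there.\<close>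
lemma linear_form_nonneg_if_ratio_bounded:
  assumes "cone_nonneg \<beta> x y" "1 \<le> \<beta>" "\<beta> = 1 \<longrightarrow> x + y \<le> 0"
    and "ratio_bounded \<beta> (p0, p1)"
  shows "0 \<le> x * p0 + y * p1"
proof (cases "\<beta> = 1")
  case True
  then have "p0 = p1" "x + y = 0"
    using assms by (auto simp: cone_nonneg_def ratio_bounded_def)
  then show ?thesis
    by (simp add: distrib_right[symmetric])
next
  case False
  then have "1 < \<beta>\<^sup>2"
    using assms(2) by (simp add: one_less_power)
  have "(\<beta>\<^sup>2 - 1) * (x * p0 + y * p1) = (\<beta> * p0 - p1) * (x * \<beta> + y) + (\<beta> * p1 - p0) * (x + y * \<beta>)"
    by (simp add: power2_eq_square algebra_simps)
  also have "\<dots> \<ge> 0"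
    using assms(1,4) by (simp add: cone_nonneg_def ratio_bounded_def)
  finally show ?thesis
    using \<open>1 < \<beta>\<^sup>2\<close> by (simp add: zero_le_mult_iff)
qed

lemma gam_pos: "gam a b > 0"
  by (simp add: gam_def)

lemma KK_pos: "a + b > 1 \<Longrightarrow> KK a b > 0"
  using gam_pos[of a b] by (simp add: KK_def)

lemma cone_nonneg_if_L123:
  fixes a b \<beta> :: real
  defines "g \<equiv> gam a b"
  assumes "0 \<le> a" "a \<le> 1" "b \<le> 1" "a + b > 1" "1 \<le> \<beta>"
    and "\<beta> \<in> L1 a b \<union> L2 a b \<union> L3 a b"
  shows "cone_nonneg \<beta> (\<beta> * b * g - a) ((1 - a) * g - \<beta> * (1 - b))"
proof -
  consider (L1) "\<beta> \<in> L1 a b" | (L23) "\<beta> \<in> L2 a b \<or> \<beta> \<in> L3 a b"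
    using assms(7) by blast
  then show ?thesis
  proof cases
    case L1
    have "1 - b > 0"
    proof (rule ccontr)
      assume "\<not> 1 - b > 0"
      then have "b = 1" using assms(4) by simp
      then show False using L1 assms(6) by (auto simp: L1_def)
    qed
    have "(1 - b) * \<beta>\<^sup>2 - g * ((1 - a) + b) * \<beta> + a \<le> 0"
      by (rule quadratic_nonpos_between_roots[where D = "D1 a b"])
        (use L1 \<open>1 - b > 0\<close> in \<open>auto simp: L1_def D1_def g_def power_mult_distrib mult_ac\<close>)
    moreover have "(1 - a) / (1 - b) * g \<le> \<beta>"
      using L1 by (auto simp: L1_def g_def)
    ultimately show ?thesis
      using \<open>1 - b > 0\<close> assms(6)
      by (intro cone_nonneg_if_nonpos) (auto simp: pos_divide_le_eq power2_eq_square algebra_simps)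
  next
    case L23
    have "b * g > 0"
      using assms(2-5) gam_pos[of a b] by (simp add: g_def)
    have "D2 a b \<ge> 0" and roots: "\<beta> \<le> ((a + (1 - b)) - sqrt (D2 a b)) / (2 * (b * g))
        \<or> ((a + (1 - b)) + sqrt (D2 a b)) / (2 * (b * g)) \<le> \<beta>"
      using L23 unfolding L2_def L3_def g_def mult.assoc by auto
    moreover have "D2 a b = (a + (1 - b))\<^sup>2 - 4 * (b * g) * ((1 - a) * g)"
      by (simp add: D2_def g_def power2_eq_square)
    ultimately have "(b * g) * \<beta>\<^sup>2 - (a + (1 - b)) * \<beta> + (1 - a) * g \<ge> 0"
      using \<open>b * g > 0\<close> by (intro quadratic_nonneg_outside_roots) auto
    moreover have "\<beta> * (1 - b) \<le> (1 - a) * g"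
    proof (cases "b = 1")
      case True
      then show ?thesis using assms(3) gam_pos[of a b] by (simp add: g_def)
    next
      case False
      then have "1 - b > 0" "\<beta> \<le> (1 - a) / (1 - b) * g"
        using assms(4) L23 by (auto simp: L2_def L3_def g_def)
      then show ?thesis by (simp add: pos_le_divide_eq algebra_simps)
    qed
    ultimately show ?thesis
      using assms(6)
      by (intro cone_nonneg_if_nonneg) (auto simp: power2_eq_square algebra_simps)
  qed
qed

lemma cone_nonneg_if_L456:
  fixes a b \<beta> :: real
  defines "g \<equiv> gam a b"
  assumes "a \<le> 1" "0 \<le> b" "b \<le> 1" "a + b > 1" "1 \<le> \<beta>"
    and "\<beta> \<in> L4 a b \<union> L5 a b \<union> L6 a b"
  shows "cone_nonneg \<beta> (\<beta> * a - b * g) ((1 - b) - \<beta> * (1 - a) * g)"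
proof -
  have "a > 0"
    using assms(4,5) by simp
  consider (L45) "\<beta> \<in> L4 a b \<or> \<beta> \<in> L5 a b" | (L6) "\<beta> \<in> L6 a b"
    using assms(7) by blast
  then have "cone_nonneg \<beta> ((1 - b) - \<beta> * (1 - a) * g) (\<beta> * a - b * g)"
  proof cases
    case L45
    have "D1 a b \<ge> 0" and "\<beta> \<le> (g * ((1 - a) + b) - sqrt (D1 a b)) / (2 * a)
        \<or> (g * ((1 - a) + b) + sqrt (D1 a b)) / (2 * a) \<le> \<beta>"
      using L45 by (auto simp: L4_def L5_def g_def)
    then have "a * \<beta>\<^sup>2 - g * ((1 - a) + b) * \<beta> + (1 - b) \<ge> 0"
      using \<open>a > 0\<close> by (intro quadratic_nonneg_outside_roots[where D = "D1 a b"])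
        (auto simp: D1_def g_def power_mult_distrib)
    moreover have "\<beta> \<le> b * g / a"
      using L45 by (auto simp: L4_def L5_def g_def)
    ultimately show ?thesis
      using \<open>a > 0\<close> assms(6)
      by (intro cone_nonneg_if_nonpos) (auto simp: pos_le_divide_eq power2_eq_square algebra_simps)
  next
    case L6
    have "1 - a > 0"
    proof (rule ccontr)
      assume "\<not> 1 - a > 0"
      then have "a = 1" using assms(2) by simp
      then show False using L6 assms(6) by (auto simp: L6_def)
    qed
    then have "(1 - a) * g > 0"
      using gam_pos[of a b] by (simp add: g_def)
    have "D2 a b \<ge> 0" and "((a + (1 - b)) - sqrt (D2 a b)) / (2 * ((1 - a) * g)) \<le> \<beta>"
        "\<beta> \<le> ((a + (1 - b)) + sqrt (D2 a b)) / (2 * ((1 - a) * g))"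
      using L6 unfolding L6_def g_def mult.assoc by auto
    moreover have "D2 a b = (a + (1 - b))\<^sup>2 - 4 * ((1 - a) * g) * (b * g)"
      by (simp add: D2_def g_def power2_eq_square)
    ultimately have "(1 - a) * g * \<beta>\<^sup>2 - (a + (1 - b)) * \<beta> + b * g \<le> 0"
      using \<open>(1 - a) * g > 0\<close> by (intro quadratic_nonpos_between_roots) auto
    moreover have "b * g / a \<le> \<beta>"
      using L6 by (auto simp: L6_def g_def)
    ultimately show ?thesis
      using \<open>a > 0\<close> assms(6)
      by (intro cone_nonneg_if_nonneg) (auto simp: pos_divide_le_eq power2_eq_square algebra_simps)
  qed
  then show ?thesis
    by (simp add: cone_nonneg_commute)
qed

lemma ratio_bounded_PP_Cons:
  fixes a b \<beta> :: real
  defines "g \<equiv> gam a b"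
  assumes "a + b > 1" "1 \<le> \<beta>"
    and cone1: "cone_nonneg \<beta> (\<beta> * a - b * g) ((1 - b) - \<beta> * (1 - a) * g)"
    and cone2: "cone_nonneg \<beta> (\<beta> * b * g - a) ((1 - a) * g - \<beta> * (1 - b))"
    and "ratio_bounded \<beta> (PP a b u)"
  shows "ratio_bounded \<beta> (PP a b (c # u))"
proof -
  obtain p0 p1 where pp: "PP a b u = (p0, p1)"
    by fastforce
  have bounded: "ratio_bounded \<beta> (p0, p1)" "ratio_bounded \<beta> (p1, p0)"
    using assms(6) by (auto simp: pp ratio_bounded_def)
  \<comment> \<open>at \<open>\<beta> = 1\<close> the two forms are negatives of each other\<close>
  have diag1: "\<beta> = 1 \<longrightarrow> (\<beta> * a - b * g) + ((1 - b) - \<beta> * (1 - a) * g) \<le> 0"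
    and diag2: "\<beta> = 1 \<longrightarrow> (\<beta> * b * g - a) + ((1 - a) * g - \<beta> * (1 - b)) \<le> 0"
    using cone1 cone2 by (auto simp: cone_nonneg_def algebra_simps)
  note form1 = linear_form_nonneg_if_ratio_bounded[OF cone1 assms(3) diag1]
  note form2 = linear_form_nonneg_if_ratio_bounded[OF cone2 assms(3) diag2]
  have K: "KK a b > 0"
    using assms(2) by (rule KK_pos)
  show ?thesis
  proof (cases c)
    case False
    have "\<beta> * snd (PP a b (c # u)) - fst (PP a b (c # u))
        = KK a b * ((\<beta> * a - b * g) * p0 + ((1 - b) - \<beta> * (1 - a) * g) * p1)"
      "\<beta> * fst (PP a b (c # u)) - snd (PP a b (c # u))
        = KK a b * ((\<beta> * b * g - a) * p0 + ((1 - a) * g - \<beta> * (1 - b)) * p1)"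
      using False by (simp_all add: pp g_def Let_def algebra_simps)
    then show ?thesis
      using form1[OF bounded(1)] form2[OF bounded(1)] K
      by (simp add: ratio_bounded_def) (smt (verit) mult_nonneg_nonneg)
  next
    case True
    have "\<beta> * snd (PP a b (c # u)) - fst (PP a b (c # u))
        = KK a b * ((\<beta> * b * g - a) * p1 + ((1 - a) * g - \<beta> * (1 - b)) * p0)"
      "\<beta> * fst (PP a b (c # u)) - snd (PP a b (c # u))
        = KK a b * ((\<beta> * a - b * g) * p1 + ((1 - b) - \<beta> * (1 - a) * g) * p0)"
      using True by (simp_all add: pp g_def Let_def algebra_simps)
    then show ?thesis
      using form1[OF bounded(2)] form2[OF bounded(2)] K
      by (simp add: ratio_bounded_def) (smt (verit) mult_nonneg_nonneg)
  qed
qed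

theorem lemma9:
  fixes a b :: real
  assumes "0 \<le> a" "a \<le> 1" "0 \<le> b" "b \<le> 1" "a + b > 1"
    and "(L1 a b \<union> L2 a b \<union> L3 a b) \<inter> (L4 a b \<union> L5 a b \<union> L6 a b) \<inter> L0 a b \<noteq> {}"
  shows "\<exists>\<beta>::real. 1 \<le> \<beta> \<and> \<beta> \<le> min (a / ((1 - a) * gam a b)) (b * gam a b / (1 - b)) \<and>
    (\<forall>n::nat. n \<ge> 1 \<longrightarrow>
       (\<forall>u::bool list. length u = n - 1 \<longrightarrow>
          \<beta> * P1 a b u \<ge> P0 a b u \<and> \<beta> * P0 a b u \<ge> P1 a b u) \<longrightarrow>
       (\<forall>x::bool list. length x = n \<longrightarrow>
          \<beta> * P1 a b x \<ge> P0 a b x \<and> \<beta> * P0 a b x \<ge> P1 a b x))"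
proof -
  obtain \<beta> where L123: "\<beta> \<in> L1 a b \<union> L2 a b \<union> L3 a b"
    and L456: "\<beta> \<in> L4 a b \<union> L5 a b \<union> L6 a b" and L0: "\<beta> \<in> L0 a b"
    using assms(6) by blast
  have "1 \<le> \<beta>"
    using L0 by (simp add: L0_def)
  note step = ratio_bounded_PP_Cons[OF assms(5) \<open>1 \<le> \<beta>\<close>
      cone_nonneg_if_L456[OF assms(2-5) \<open>1 \<le> \<beta>\<close> L456]
      cone_nonneg_if_L123[OF assms(1,2,4,5) \<open>1 \<le> \<beta>\<close> L123]]
  have "ratio_bounded \<beta> (PP a b x)"
    if "1 \<le> n" "length x = n" "\<forall>u. length u = n - 1 \<longrightarrow> ratio_bounded \<beta> (PP a b u)"
    for n and x :: "bool list"
    using that by (cases x) (auto intro: step)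
  with L0 show ?thesis
    by (auto simp: L0_def ratio_bounded_def P0_def P1_def)
qed

end
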